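(* Let $(m_\epsilon)_{\epsilon\in(0,1)}$ satisfy Assumption P with constant $K$. If $m_\epsilon\to\infty$ and $\bar\sigma_{m_\epsilon}\to0$ as $\epsilon\to0$, then $$\lim_{\epsilon\to0}\mathbb E_{\theta^\circ}P_{\vartheta^{m_\epsilon}|Y}\Big((10K)^{-1}[b_{m_\epsilon}\vee\bar\sigma_{m_\epsilon}]\le\|\vartheta^{m_\epsilon}-\theta^\circ\|^2\le10K[b_{m_\epsilon}\vee\bar\sigma_{m_\epsilon}]\Big)=1.$$
   Context: Let $\ell^2$ be the space of square-summable real sequences with norm $\|\cdot\|$. Fix a bounded real sequence $\lambda=(\lambda_j)_{j\ge1}$ with $\lambda_j\ne0$ for all $j$, a noise level $\epsilon\in(0,1)$ and a true parameter $\theta^\circ\in\ell^2$. The data $Y=(Y_j)_{j\ge1}$ satisfy $Y_j=\lambda_j\theta^\circ_j+\sqrt\epsilon\,\xi_j$ with $\xi_j$ i.i.d. $N(0,1)$; $\mathbb E_{\theta^\circ}$, $P_{\theta^\circ}$ denote expectation and probability under this law. Fix prior means $\eta=(\eta_j)_{j\ge1}$ with $\theta^\circ-\eta\in\ell^2$ and prior variances $\tau_j\in(0,\infty)$ (possibly depending on $\epsilon$). For $m\in\mathbb N$ the sieve prior $P_{\vartheta^m}$ is the law of $\vartheta^m=(\vartheta^m_j)_{j\ge1}$ with independent coordinates, $\vartheta^m_j\sim N(\eta_j,\tau_j)$ for $j\le m$ and $\vartheta^m_j=\eta_j$ a.s. for $j>m$, in the model $Y_j=\lambda_j\vartheta^m_j+\sqrt\epsilon\xi_j$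 with $\vartheta^m$ independent of $(\xi_j)$. Put $\sigma_j:=(\lambda_j^2\epsilon^{-1}+\tau_j^{-1})^{-1}$ and $\theta^Y_j:=\sigma_j(\tau_j^{-1}\eta_j+\lambda_j\epsilon^{-1}Y_j)$. The posterior $P_{\vartheta^m|Y}$ makes the coordinates independent with $\vartheta^m_j\sim N(\theta^Y_j,\sigma_j)$ for $j\le m$ and $\vartheta^m_j=\eta_j$ for $j>m$; the Bayes estimator is $\hat\theta^m:=\mathbb E[\vartheta^m|Y]$, i.e. $\hat\theta^m_j=\theta^Y_j$ for $j\le m$, $\hat\theta^m_j=\eta_j$ for $j>m$. Define $b_m:=\sum_{j>m}(\theta^\circ_j-\eta_j)^2$, $\bar\sigma_m:=\sum_{j=1}^m\sigma_j$, $\sigma_{(m)}:=\max_{1\le j\le m}\sigma_j$, $r_m:=\sum_{j=1}^m\sigma_j^2\tau_j^{-2}(\eta_j-\theta^\circ_j)^2$ (the quantities involving $\sigma$ depend on $\epsilon$). Assumption P for a family $(m_\epsilon)_{\epsilon\in(0,1)}\subset\mathbb N$: there exist constants $\epsilon_\theta\in(0,1)$ and $K\in[1,\infty)$ (depending on $\theta^\circ,\lambda,\eta,\tau$) such that $\sup_{0<\epsilon<\epsilon_\theta}(r_{m_\epsilon}\vee m_\epsilon\sigma_{(m_\epsilon)})/(b_{m_\epsilon}\vee\bar\sigma_{m_\epsilon})\le K$. *)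

theory Defs
  imports "HOL-Probability.Probability"
begin

text \<open>Coordinates are indexed from 0: paper index j corresponds to j-1 here,
  so the first m coordinates are {..<m}.\<close>

definition sq_norm :: "(nat \<Rightarrow> real) \<Rightarrow> real" where
  "sq_norm f = (\<Sum>j. (f j)\<^sup>2)"

definition post_var :: "(nat \<Rightarrow> real) \<Rightarrow> real \<Rightarrow> (nat \<Rightarrow> real) \<Rightarrow> nat \<Rightarrow> real" where
  "post_var lam eps tau j = inverse ((lam j)\<^sup>2 / eps + inverse (tau j))"

definition post_mean ::
  "(nat \<Rightarrow> real) \<Rightarrow> (nat \<Rightarrow> real) \<Rightarrow> real \<Rightarrow> (nat \<Rightarrow> real) \<Rightarrow> (nat \<Rightarrow> real) \<Rightarrow> nat \<Rightarrow> real" where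
  "post_mean lam eta eps tau Y j =
     post_var lam eps tau j * (eta j / tau j + lam j * Y j / eps)"

definition data_law :: "(nat \<Rightarrow> real) \<Rightarrow> (nat \<Rightarrow> real) \<Rightarrow> real \<Rightarrow> (nat \<Rightarrow> real) measure" where
  "data_law lam theta eps =
     PiM UNIV (\<lambda>j. density lborel (normal_density (lam j * theta j) (sqrt eps)))"

text \<open>Sieve posterior: independent coordinates, N(theta^Y_j, sigma_j) for the first m,
  point mass at eta_j otherwise (normal_density takes the standard deviation).\<close>
definition sieve_posterior ::
  "(nat \<Rightarrow> real) \<Rightarrow> (nat \<Rightarrow> real) \<Rightarrow> real \<Rightarrow> (nat \<Rightarrow> real) \<Rightarrow> nat \<Rightarrow> (nat \<Rightarrow> real)
     \<Rightarrow> (nat \<Rightarrow> real) measure" where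
  "sieve_posterior lam eta eps tau m Y =
     PiM UNIV (\<lambda>j. if j < m
        then density lborel (normal_density (post_mean lam eta eps tau Y j) (sqrt (post_var lam eps tau j)))
        else return borel (eta j))"

definition bias :: "(nat \<Rightarrow> real) \<Rightarrow> (nat \<Rightarrow> real) \<Rightarrow> nat \<Rightarrow> real" where
  "bias theta eta m = (\<Sum>j. (theta (j + m) - eta (j + m))\<^sup>2)"

definition sigma_bar :: "(nat \<Rightarrow> real) \<Rightarrow> real \<Rightarrow> (nat \<Rightarrow> real) \<Rightarrow> nat \<Rightarrow> real" where
  "sigma_bar lam eps tau m = (\<Sum>j<m. post_var lam eps tau j)"

text \<open>Maximum of sigma_1..sigma_m (the sigma_j are positive, so inserting 0 only
  matters for m = 0).\<close>
definition sigma_max :: "(nat \<Rightarrow> real) \<Rightarrow> real \<Rightarrow> (nat \<Rightarrow> real) \<Rightarrow> nat \<Rightarrow> real" where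
  "sigma_max lam eps tau m = Max (insert 0 (post_var lam eps tau ` {..<m}))"

definition rterm ::
  "(nat \<Rightarrow> real) \<Rightarrow> (nat \<Rightarrow> real) \<Rightarrow> (nat \<Rightarrow> real) \<Rightarrow> real \<Rightarrow> (nat \<Rightarrow> real) \<Rightarrow> nat \<Rightarrow> real" where
  "rterm lam theta eta eps tau m =
     (\<Sum>j<m. (post_var lam eps tau j)\<^sup>2 / (tau j)\<^sup>2 * (eta j - theta j)\<^sup>2)"

definition assumption_P ::
  "(nat \<Rightarrow> real) \<Rightarrow> (nat \<Rightarrow> real) \<Rightarrow> (nat \<Rightarrow> real) \<Rightarrow> (real \<Rightarrow> nat \<Rightarrow> real) \<Rightarrow> (real \<Rightarrow> nat)
     \<Rightarrow> real \<Rightarrow> real \<Rightarrow> bool" where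
  "assumption_P lam theta eta tau m eps_th K \<longleftrightarrow>
     0 < eps_th \<and> eps_th < 1 \<and> 1 \<le> K \<and>
     (\<forall>eps. 0 < eps \<and> eps < eps_th \<longrightarrow>
        max (rterm lam theta eta eps (tau eps) (m eps)) (real (m eps) * sigma_max lam eps (tau eps) (m eps))
        / max (bias theta eta (m eps)) (sigma_bar lam eps (tau eps) (m eps)) \<le> K)"

end

theory Submission
  imports Defs
begin

text \<open>Write D for the squared error of the posterior mean on the first m coordinates and
  R = max b_m sigmabar_m. Under the posterior, the squared distance to theta is the bias b_m plus a
  sum of m independent squared Gaussians, with mean D + sigmabar_m + b_m and variance at most
  sigma_(m) (2 sigmabar_m + 4 D). Under the data law, D is itself such a sum, with mean at most
  r_m + sigmabar_m <= (K + 1) R and variance at most sigma_(m) (2 sigmabar_m + 4 r_m). Assumption P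
  bounds r_m by K R and m sigma_(m) by K R, so Chebyshev's inequality, applied first to D and
  then to the posterior, shows that the expected posterior mass of [R / (10 K), 10 K R] is at
  least 1 - C(K) / m, which tends to 1 as m tends to infinity.\<close>

lemma
  fixes F :: "nat \<Rightarrow> real measure" and f :: "nat \<Rightarrow> real \<Rightarrow> real"
  assumes P: "\<And>i. prob_space (F i)" and K: "finite K"
    and int: "\<And>k. k \<in> K \<Longrightarrow> integrable (F k) (f k)"
  shows integrable_PiM_UNIV_prod: "integrable (PiM UNIV F) (\<lambda>x. \<Prod>k\<in>K. f k (x k))"
    and integral_PiM_UNIV_prod:
      "(\<integral>x. (\<Prod>k\<in>K. f k (x k)) \<partial>PiM UNIV F) = (\<Prod>k\<in>K. integral\<^sup>L (F k) (f k))"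
proof -
  interpret product_prob_space F UNIV
    using P by (simp add: product_prob_spaceI)
  have D: "distr (PiM UNIV F) (PiM K F) (\<lambda>x. restrict x K) = PiM K F"
    using K by (intro distr_PiM_restrict_finite) auto
  have m: "(\<lambda>x. \<Prod>k\<in>K. f k (x k)) \<in> borel_measurable (PiM K F)"
    using int by (intro borel_measurable_prod) auto
  have eq: "(\<lambda>x. \<Prod>k\<in>K. f k (restrict x K k)) = (\<lambda>x. \<Prod>k\<in>K. f k (x k))"
    by (intro ext prod.cong) auto
  have "integrable (PiM K F) (\<lambda>x. \<Prod>k\<in>K. f k (x k))"
    using K int by (intro product_integrable_prod) auto
  then have "integrable (distr (PiM UNIV F) (PiM K F) (\<lambda>x. restrict x K)) (\<lambda>x. \<Prod>k\<in>K. f k (x k))"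
    using D by simp
  then show "integrable (PiM UNIV F) (\<lambda>x. \<Prod>k\<in>K. f k (x k))"
    by (subst (asm) integrable_distr_eq) (auto simp: m eq measurable_restrict_subset)
  have "(\<integral>x. (\<Prod>k\<in>K. f k (x k)) \<partial>PiM UNIV F)
      = (\<integral>x. (\<Prod>k\<in>K. f k (x k)) \<partial>distr (PiM UNIV F) (PiM K F) (\<lambda>x. restrict x K))"
    by (subst integral_distr) (auto simp: m eq measurable_restrict_subset)
  also have "\<dots> = (\<Prod>k\<in>K. integral\<^sup>L (F k) (f k))"
    unfolding D using K int by (intro product_integral_prod) auto
  finally show "(\<integral>x. (\<Prod>k\<in>K. f k (x k)) \<partial>PiM UNIV F) = (\<Prod>k\<in>K. integral\<^sup>L (F k) (f k))" .
qed

lemma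
  fixes F :: "nat \<Rightarrow> real measure" and h :: "nat \<Rightarrow> real \<Rightarrow> real"
  assumes P: "\<And>i. prob_space (F i)"
    and hi: "integrable (F i) (h i)" and hj: "integrable (F j) (h j)"
    and hi2: "integrable (F i) (\<lambda>y. (h i y)\<^sup>2)"
    and centered: "integral\<^sup>L (F i) (h i) = 0"
  shows integrable_PiM_UNIV_mult_centered:
      "integrable (PiM UNIV F) (\<lambda>x. h i (x i) * h j (x j))"
    and integral_PiM_UNIV_mult_centered:
      "(\<integral>x. h i (x i) * h j (x j) \<partial>PiM UNIV F) = (if i = j then (\<integral>y. (h i y)\<^sup>2 \<partial>F i) else 0)"
proof -
  have "integrable (PiM UNIV F) (\<lambda>x. h i (x i) * h j (x j)) \<and>
    (\<integral>x. h i (x i) * h j (x j) \<partial>PiM UNIV F) = (if i = j then (\<integral>y. (h i y)\<^sup>2 \<partial>F i) else 0)"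
  proof (cases "i = j")
    case True
    have "integrable (PiM UNIV F) (\<lambda>x. \<Prod>k\<in>{i}. (h k (x k))\<^sup>2)"
      "(\<integral>x. (\<Prod>k\<in>{i}. (h k (x k))\<^sup>2) \<partial>PiM UNIV F) = (\<Prod>k\<in>{i}. \<integral>y. (h k y)\<^sup>2 \<partial>F k)"
      using hi2 by (intro integrable_PiM_UNIV_prod integral_PiM_UNIV_prod P; simp)+
    then show ?thesis using True by (simp add: power2_eq_square)
  next
    case False
    have "integrable (PiM UNIV F) (\<lambda>x. \<Prod>k\<in>{i, j}. h k (x k))"
      "(\<integral>x. (\<Prod>k\<in>{i, j}. h k (x k)) \<partial>PiM UNIV F) = (\<Prod>k\<in>{i, j}. integral\<^sup>L (F k) (h k))"
      using hi hj by (intro integrable_PiM_UNIV_prod integral_PiM_UNIV_prod P; auto)+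
    then show ?thesis using False centered by simp
  qed
  then show "integrable (PiM UNIV F) (\<lambda>x. h i (x i) * h j (x j))"
    and "(\<integral>x. h i (x i) * h j (x j) \<partial>PiM UNIV F) = (if i = j then (\<integral>y. (h i y)\<^sup>2 \<partial>F i) else 0)"
    by auto
qed

lemma
  fixes F :: "nat \<Rightarrow> real measure" and h :: "nat \<Rightarrow> real \<Rightarrow> real"
  assumes P: "\<And>i. prob_space (F i)" and J: "finite J"
    and h: "\<And>j. j \<in> J \<Longrightarrow> integrable (F j) (h j)"
    and h2: "\<And>j. j \<in> J \<Longrightarrow> integrable (F j) (\<lambda>y. (h j y)\<^sup>2)"
    and centered: "\<And>j. j \<in> J \<Longrightarrow> integral\<^sup>L (F j) (h j) = 0"
  shows integrable_PiM_UNIV_sum_centered_square: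
      "integrable (PiM UNIV F) (\<lambda>x. (\<Sum>j\<in>J. h j (x j))\<^sup>2)"
    and integral_PiM_UNIV_sum_centered_square:
      "(\<integral>x. (\<Sum>j\<in>J. h j (x j))\<^sup>2 \<partial>PiM UNIV F) = (\<Sum>j\<in>J. \<integral>y. (h j y)\<^sup>2 \<partial>F j)"
proof -
  have expand: "(\<lambda>x. (\<Sum>j\<in>J. h j (x j))\<^sup>2) = (\<lambda>x. \<Sum>i\<in>J. \<Sum>j\<in>J. h i (x i) * h j (x j))"
    by (simp add: power2_eq_square sum_product)
  have terms: "integrable (PiM UNIV F) (\<lambda>x. h i (x i) * h j (x j))"
    "(\<integral>x. h i (x i) * h j (x j) \<partial>PiM UNIV F) = (if i = j then (\<integral>y. (h i y)\<^sup>2 \<partial>F i) else 0)"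
    if "i \<in> J" "j \<in> J" for i j
    using integrable_PiM_UNIV_mult_centered[where F=F and h=h and i=i and j=j, OF P]
      integral_PiM_UNIV_mult_centered[where F=F and h=h and i=i and j=j, OF P]
      h h2 centered that by auto
  show "integrable (PiM UNIV F) (\<lambda>x. (\<Sum>j\<in>J. h j (x j))\<^sup>2)"
    unfolding expand by (intro Bochner_Integration.integrable_sum terms)
  have "(\<integral>x. (\<Sum>j\<in>J. h j (x j))\<^sup>2 \<partial>PiM UNIV F)
      = (\<Sum>i\<in>J. \<integral>x. (\<Sum>j\<in>J. h i (x i) * h j (x j)) \<partial>PiM UNIV F)"
    unfolding expand by (auto intro!: Bochner_Integration.integral_sum Bochner_Integration.integrable_sum terms)
  also have "\<dots> = (\<Sum>i\<in>J. \<Sum>j\<in>J. (\<integral>x. h i (x i) * h j (x j) \<partial>PiM UNIV F))"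
    by (auto intro!: sum.cong Bochner_Integration.integral_sum terms)
  also have "\<dots> = (\<Sum>i\<in>J. \<Sum>j\<in>J. (if i = j then (\<integral>y. (h i y)\<^sup>2 \<partial>F i) else 0))"
    by (intro sum.cong refl terms)
  also have "\<dots> = (\<Sum>j\<in>J. \<integral>y. (h j y)\<^sup>2 \<partial>F j)"
    using J by (simp add: if_distrib sum.delta cong: sum.cong)
  finally show "(\<integral>x. (\<Sum>j\<in>J. h j (x j))\<^sup>2 \<partial>PiM UNIV F) = (\<Sum>j\<in>J. \<integral>y. (h j y)\<^sup>2 \<partial>F j)" .
qed

lemma has_bochner_integral_normal_quartic:
  fixes s \<mu> :: real assumes s: "0 < s"
  shows "has_bochner_integral lborel
    (\<lambda>x. normal_density \<mu> s x *
      (a0 + a1 * (x - \<mu>) + a2 * (x - \<mu>)^2 + a3 * (x - \<mu>)^3 + a4 * (x - \<mu>)^4))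
    (a0 + a2 * s\<^sup>2 + 3 * a4 * s^4)"
proof -
  let ?n = "normal_density \<mu> s"
  have m0: "has_bochner_integral lborel (\<lambda>x. ?n x * (x - \<mu>)^0) 1"
    using normal_moment_even[OF s, of \<mu> 0] by simp
  have m1: "has_bochner_integral lborel (\<lambda>x. ?n x * (x - \<mu>)^1) 0"
    using normal_moment_odd[OF s, of \<mu> 0] by simp
  have m2: "has_bochner_integral lborel (\<lambda>x. ?n x * (x - \<mu>)^2) (s\<^sup>2)"
    using normal_moment_even[OF s, of \<mu> 1] by simp
  have m3: "has_bochner_integral lborel (\<lambda>x. ?n x * (x - \<mu>)^3) 0"
    using normal_moment_odd[OF s, of \<mu> 1] by (simp add: numeral_3_eq_3)
  have "fact (2 * 2) / ((2 / s\<^sup>2) ^ 2 * fact 2) = 3 * s^4"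
    using s by (simp add: fact_numeral field_simps power2_eq_square power4_eq_xxxx)
  then have m4: "has_bochner_integral lborel (\<lambda>x. ?n x * (x - \<mu>)^4) (3 * s^4)"
    using normal_moment_even[OF s, of \<mu> 2] by simp
  have "has_bochner_integral lborel
    (\<lambda>x. a0 * (?n x * (x - \<mu>)^0) + a1 * (?n x * (x - \<mu>)^1) + a2 * (?n x * (x - \<mu>)^2)
       + a3 * (?n x * (x - \<mu>)^3) + a4 * (?n x * (x - \<mu>)^4))
    (a0 * 1 + a1 * 0 + a2 * s\<^sup>2 + a3 * 0 + a4 * (3 * s^4))"
    by (intro has_bochner_integral_add has_bochner_integral_mult_right m0 m1 m2 m3 m4)
  then show ?thesis
    by (rule has_bochner_integral_cong[THEN iffD1, rotated -1]) (auto simp: algebra_simps)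
qed

lemma normal_centered_square_moments:
  fixes s \<mu> c w :: real assumes s: "0 < s"
  defines "F \<equiv> density lborel (normal_density \<mu> s)"
  defines "h \<equiv> (\<lambda>x. w * ((x - c)\<^sup>2 - ((\<mu> - c)\<^sup>2 + s\<^sup>2)))"
  shows "integrable F h" "integral\<^sup>L F h = 0" "integrable F (\<lambda>x. (h x)\<^sup>2)"
    "(\<integral>x. (h x)\<^sup>2 \<partial>F) = w\<^sup>2 * (2 * (s\<^sup>2)\<^sup>2 + 4 * s\<^sup>2 * (\<mu> - c)\<^sup>2)"
proof -
  define d where "d = \<mu> - c"
  have mean_poly: "has_bochner_integral lborel (\<lambda>x. normal_density \<mu> s x *
      ((- w * s\<^sup>2) + (2 * w * d) * (x - \<mu>) + w * (x - \<mu>)^2 + 0 * (x - \<mu>)^3 + 0 * (x - \<mu>)^4))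
    ((- w * s\<^sup>2) + w * s\<^sup>2 + 3 * 0 * s^4)"
    by (rule has_bochner_integral_normal_quartic[OF s])
  have mean: "has_bochner_integral F h 0"
    unfolding F_def
    by (rule has_bochner_integral_density)
       (auto simp: h_def d_def algebra_simps power2_eq_square
             intro!: has_bochner_integral_cong[THEN iffD1, OF _ _ _ mean_poly])
  have var_poly: "has_bochner_integral lborel (\<lambda>x. normal_density \<mu> s x *
      (w\<^sup>2 * s^4 + (- 4 * w\<^sup>2 * d * s\<^sup>2) * (x - \<mu>) + (w\<^sup>2 * (4 * d\<^sup>2 - 2 * s\<^sup>2)) * (x - \<mu>)^2
       + (4 * w\<^sup>2 * d) * (x - \<mu>)^3 + w\<^sup>2 * (x - \<mu>)^4))
    (w\<^sup>2 * s^4 + (w\<^sup>2 * (4 * d\<^sup>2 - 2 * s\<^sup>2)) * s\<^sup>2 + 3 * w\<^sup>2 * s^4)"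
    by (rule has_bochner_integral_normal_quartic[OF s])
  have var: "has_bochner_integral F (\<lambda>x. (h x)\<^sup>2) (w\<^sup>2 * (2 * (s\<^sup>2)\<^sup>2 + 4 * s\<^sup>2 * (\<mu> - c)\<^sup>2))"
    unfolding F_def
    by (rule has_bochner_integral_density)
       (auto simp: h_def d_def algebra_simps power2_eq_square power3_eq_cube power4_eq_xxxx
             intro!: has_bochner_integral_cong[THEN iffD1, OF _ _ _ var_poly])
  show "integrable F h" "integral\<^sup>L F h = 0" "integrable F (\<lambda>x. (h x)\<^sup>2)"
    "(\<integral>x. (h x)\<^sup>2 \<partial>F) = w\<^sup>2 * (2 * (s\<^sup>2)\<^sup>2 + 4 * s\<^sup>2 * (\<mu> - c)\<^sup>2)"
    using mean var by (auto dest: has_bochner_integral_integral_eq intro: integrable.intros)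
qed

text \<open>Chebyshev's inequality; the factors outside \<open>J\<close> are arbitrary.\<close>

lemma prob_PiM_normal_weighted_squares_deviation:
  fixes F :: "nat \<Rightarrow> real measure" and \<mu> s c w :: "nat \<Rightarrow> real" and J :: "nat set" and t :: real
  assumes P: "\<And>i. prob_space (F i)" and sets_F: "\<And>i. sets (F i) = sets borel"
    and J: "finite J"
    and normal: "\<And>j. j \<in> J \<Longrightarrow> F j = density lborel (normal_density (\<mu> j) (s j))"
    and s: "\<And>j. j \<in> J \<Longrightarrow> 0 < s j"
    and t: "0 < t"
  shows "measure (PiM UNIV F) {x \<in> space (PiM UNIV F).
      t \<le> \<bar>(\<Sum>j\<in>J. w j * (x j - c j)\<^sup>2) - (\<Sum>j\<in>J. w j * ((\<mu> j - c j)\<^sup>2 + (s j)\<^sup>2))\<bar>}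
     \<le> (\<Sum>j\<in>J. (w j)\<^sup>2 * (2 * ((s j)\<^sup>2)\<^sup>2 + 4 * (s j)\<^sup>2 * (\<mu> j - c j)\<^sup>2)) / t\<^sup>2"
proof -
  interpret prob_space "PiM UNIV F" by (intro prob_space_PiM P)
  define h where "h = (\<lambda>j x. w j * ((x - c j)\<^sup>2 - ((\<mu> j - c j)\<^sup>2 + (s j)\<^sup>2)))"
  have "sets (PiM UNIV F) = sets (PiM UNIV (\<lambda>_. borel :: real measure))"
    by (rule sets_PiM_cong) (auto simp: sets_F)
  then have meas: "(\<lambda>x. \<Sum>j\<in>J. h j (x j)) \<in> borel_measurable (PiM UNIV F)"
    unfolding h_def by (subst measurable_cong_sets[OF _ refl]) measurable
  have moments: "integrable (F j) (h j)" "integral\<^sup>L (F j) (h j) = 0"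
    "integrable (F j) (\<lambda>x. (h j x)\<^sup>2)"
    "(\<integral>x. (h j x)\<^sup>2 \<partial>F j) = (w j)\<^sup>2 * (2 * ((s j)\<^sup>2)\<^sup>2 + 4 * (s j)\<^sup>2 * (\<mu> j - c j)\<^sup>2)"
    if "j \<in> J" for j
    using normal_centered_square_moments[OF s[OF that], of "\<mu> j" "w j" "c j"] normal[OF that]
    unfolding h_def by auto
  have "(\<Sum>j\<in>J. h j (x j))
      = (\<Sum>j\<in>J. w j * (x j - c j)\<^sup>2) - (\<Sum>j\<in>J. w j * ((\<mu> j - c j)\<^sup>2 + (s j)\<^sup>2))" for x
    unfolding h_def by (simp add: right_diff_distrib sum_subtractf)
  moreover have "prob {x \<in> space (PiM UNIV F). t \<le> \<bar>\<Sum>j\<in>J. h j (x j)\<bar>}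
      \<le> (\<integral>x. (\<Sum>j\<in>J. h j (x j))\<^sup>2 \<partial>PiM UNIV F) / t\<^sup>2"
    using meas t integrable_PiM_UNIV_sum_centered_square[OF P J, where h=h] moments
    by (intro second_moment_method) auto
  moreover have "(\<integral>x. (\<Sum>j\<in>J. h j (x j))\<^sup>2 \<partial>PiM UNIV F)
      = (\<Sum>j\<in>J. (w j)\<^sup>2 * (2 * ((s j)\<^sup>2)\<^sup>2 + 4 * (s j)\<^sup>2 * (\<mu> j - c j)\<^sup>2))"
    using integral_PiM_UNIV_sum_centered_square[OF P J, where h=h] moments by simp
  ultimately show ?thesis by simp
qed

lemma sets_Collect_PiM_borel:
  assumes "Measurable.pred (PiM UNIV (\<lambda>_. borel :: real measure)) P"
    and "sets N = sets (PiM UNIV (\<lambda>_. borel :: real measure))"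
  shows "{Y. P Y} \<in> sets N"
proof -
  have "{Y \<in> space (PiM UNIV (\<lambda>_. borel :: real measure)). P Y} \<in> sets (PiM UNIV (\<lambda>_. borel :: real measure))"
    using assms(1) by measurable
  then show ?thesis using assms(2) by (simp add: space_PiM)
qed

lemma sq_norm_eq_partial_sum_plus_bias:
  fixes v theta eta :: "nat \<Rightarrow> real"
  assumes tail: "\<And>j. m \<le> j \<Longrightarrow> v j = eta j" and diff_l2: "summable (\<lambda>j. (theta j - eta j)\<^sup>2)"
  shows "sq_norm (\<lambda>j. v j - theta j) = (\<Sum>j<m. (v j - theta j)\<^sup>2) + bias theta eta m"
proof -
  have shift: "(\<lambda>j. (v (j + m) - theta (j + m))\<^sup>2) = (\<lambda>j. (theta (j + m) - eta (j + m))\<^sup>2)"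
    using tail by (auto simp: power2_commute)
  have "summable (\<lambda>j. (theta (j + m) - eta (j + m))\<^sup>2)"
    using diff_l2 by (subst summable_iff_shift)
  then have "summable (\<lambda>j. (v j - theta j)\<^sup>2)"
    unfolding shift[symmetric] by (subst (asm) summable_iff_shift[where f="\<lambda>j. (v j - theta j)\<^sup>2"])
  from suminf_split_initial_segment[OF this, of m] show ?thesis
    unfolding sq_norm_def bias_def shift by simp
qed

text \<open>Beyond \<open>m\<close> the coordinates are almost surely \<open>eta\<close>, so \<open>sq_norm (v - theta)\<close> is the
  Gaussian head sum plus the deterministic bias, and Chebyshev applies to the head sum.\<close>

lemma measure_PiM_sieve_sq_norm_concentration:
  fixes p \<sigma> theta eta :: "nat \<Rightarrow> real" and m :: nat and t :: real
  assumes \<sigma>: "\<And>j. j < m \<Longrightarrow> 0 < \<sigma> j"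
    and diff_l2: "summable (\<lambda>j. (theta j - eta j)\<^sup>2)"
    and t: "0 < t"
  defines "G \<equiv> (\<lambda>j. if j < m then density lborel (normal_density (p j) (sqrt (\<sigma> j)))
                    else return borel (eta j))"
  shows "1 - (\<Sum>j<m. 2 * (\<sigma> j)\<^sup>2 + 4 * \<sigma> j * (p j - theta j)\<^sup>2) / t\<^sup>2
    \<le> measure (PiM UNIV G) {v. \<bar>sq_norm (\<lambda>j. v j - theta j)
          - ((\<Sum>j<m. (p j - theta j)\<^sup>2 + \<sigma> j) + bias theta eta m)\<bar> < t}"
proof -
  have P: "prob_space (G j)" for j
    unfolding G_def using \<sigma> by (auto intro!: prob_space_normal_density prob_space_return)
  interpret prob_space "PiM UNIV G" by (intro prob_space_PiM P)
  have sets_G: "sets (G i) = sets borel" for i by (simp add: G_def)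
  have sets_PiM: "sets (PiM UNIV G) = sets (PiM UNIV (\<lambda>_. borel :: real measure))"
    by (rule sets_PiM_cong) (auto simp: sets_G)
  have space_PiM_G: "space (PiM UNIV G) = UNIV"
    using sets_eq_imp_space_eq[OF sets_PiM] by (simp add: space_PiM PiE_UNIV_domain)
  define \<mu> where "\<mu> = (\<Sum>j<m. (p j - theta j)\<^sup>2 + \<sigma> j)"
  define A where "A = {v. \<bar>sq_norm (\<lambda>j. v j - theta j) - (\<mu> + bias theta eta m)\<bar> < t}"
  define B where "B = {v \<in> space (PiM UNIV G). t \<le> \<bar>(\<Sum>j<m. (v j - theta j)\<^sup>2) - \<mu>\<bar>}"
  have A_sets: "A \<in> sets (PiM UNIV G)"
    unfolding A_def sq_norm_def by (rule sets_Collect_PiM_borel[OF _ sets_PiM]) measurable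
  have B_sets: "B \<in> sets (PiM UNIV G)"
    unfolding B_def space_PiM_G by (rule sets_Collect_PiM_borel[OF _ sets_PiM]) measurable
  have "AE v in PiM UNIV G. v j = eta j" if "m \<le> j" for j
  proof (rule AE_PiM_component[OF P, of j UNIV "\<lambda>x. x = eta j", simplified])
    have G_j: "G j = return borel (eta j)"
      using that by (simp add: G_def)
    show "AE x in G j. x = eta j"
      unfolding G_j by (subst AE_return) auto
  qed
  then have "AE v in PiM UNIV G. \<forall>j. m \<le> j \<longrightarrow> v j = eta j"
    by (subst AE_all_countable) auto
  then have "AE v in PiM UNIV G. v \<in> space (PiM UNIV G) - B \<longrightarrow> v \<in> A"
  proof eventually_elim
    case (elim v)
    then have "sq_norm (\<lambda>j. v j - theta j) = (\<Sum>j<m. (v j - theta j)\<^sup>2) + bias theta eta m"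
      using sq_norm_eq_partial_sum_plus_bias[OF _ diff_l2] by blast
    then show ?case by (auto simp: A_def B_def)
  qed
  then have "prob (space (PiM UNIV G) - B) \<le> prob A"
    by (rule finite_measure_mono_AE[OF _ A_sets])
  moreover have "prob (space (PiM UNIV G) - B) = 1 - prob B"
    by (rule prob_compl[OF B_sets])
  moreover have "prob B \<le> (\<Sum>j<m. 2 * (\<sigma> j)\<^sup>2 + 4 * \<sigma> j * (p j - theta j)\<^sup>2) / t\<^sup>2"
  proof -
    have "prob B \<le> (\<Sum>j<m. 1\<^sup>2 * (2 * ((sqrt (\<sigma> j))\<^sup>2)\<^sup>2 + 4 * (sqrt (\<sigma> j))\<^sup>2 * (p j - theta j)\<^sup>2)) / t\<^sup>2"
      using prob_PiM_normal_weighted_squares_deviation[where F=G and J="{..<m}" and \<mu>=p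
          and s="\<lambda>j. sqrt (\<sigma> j)" and w="\<lambda>_. 1" and c=theta, OF P sets_G _ _ _ t]
        \<sigma> unfolding B_def \<mu>_def by (simp add: G_def less_imp_le)
    then show ?thesis using \<sigma> by (simp add: less_imp_le)
  qed
  ultimately show ?thesis unfolding A_def \<mu>_def by simp
qed

lemma density_normal_shift:
  fixes \<mu> \<delta> s :: real
  shows "density lborel (normal_density (\<mu> + \<delta>) s) = distr (density lborel (normal_density \<mu> s)) borel (\<lambda>x. x + \<delta>)"
proof (rule measure_eqI)
  show "sets (density lborel (normal_density (\<mu> + \<delta>) s)) = sets (distr (density lborel (normal_density \<mu> s)) borel (\<lambda>x. x + \<delta>))"
    by simp
next
  fix A assume A: "A \<in> sets (density lborel (normal_density (\<mu> + \<delta>) s))"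
  then have A': "A \<in> sets borel" by simp
  have "emeasure (density lborel (normal_density (\<mu> + \<delta>) s)) A
      = (\<integral>\<^sup>+x. ennreal (normal_density (\<mu> + \<delta>) s x) * indicator A x \<partial>lborel)"
    using A' by (simp add: emeasure_density)
  also have "\<dots> = (\<integral>\<^sup>+x. ennreal (normal_density \<mu> s x) * indicator ((\<lambda>x. x + \<delta>) -` A) x \<partial>lborel)"
    using A' by (subst nn_integral_real_affine[where c=1 and t=\<delta>])
      (auto intro!: nn_integral_cong simp: normal_density_def indicator_def algebra_simps)
  also have "\<dots> = emeasure (density lborel (normal_density \<mu> s)) ((\<lambda>x. x + \<delta>) -` A)"
  proof -
    have "(\<lambda>x::real. x + \<delta>) -` A \<inter> space borel \<in> sets borel"
      using A' by (intro measurable_sets[of _ borel borel]) auto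
    then show ?thesis by (subst emeasure_density) auto
  qed
  also have "\<dots> = emeasure (distr (density lborel (normal_density \<mu> s)) borel (\<lambda>x. x + \<delta>)) A"
    using A' by (subst emeasure_distr) auto
  finally show "emeasure (density lborel (normal_density (\<mu> + \<delta>) s)) A = emeasure (distr (density lborel (normal_density \<mu> s)) borel (\<lambda>x. x + \<delta>)) A" .
qed

lemma PiM_UNIV_distr_shift:
  fixes H H0 :: "nat \<Rightarrow> real measure" and \<delta> :: "nat \<Rightarrow> real"
  assumes P0: "\<And>i. prob_space (H0 i)"
    and S0: "\<And>i. sets (H0 i) = sets borel"
    and HH: "\<And>i. H i = distr (H0 i) borel (\<lambda>x. x + \<delta> i)"
  shows "PiM UNIV H = distr (PiM UNIV H0) (PiM UNIV H) (\<lambda>z j. z j + \<delta> j)"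
proof -
  have gm: "(\<lambda>x. x + \<delta> i) \<in> measurable (H0 i) borel" for i
    unfolding measurable_cong_sets[OF S0 refl] by simp
  have P: "prob_space (H i)" for i unfolding HH by (intro prob_space.prob_space_distr P0 gm)
  have shift_sets: "(\<lambda>x. x + \<delta> i) -` A \<in> sets borel" if "A \<in> sets borel" for i A
    using measurable_sets[of "\<lambda>x::real. x + \<delta> i" borel borel A] that by simp
  interpret Hp: product_prob_space H UNIV by (intro product_prob_spaceI P)
  interpret H0p: product_prob_space H0 UNIV by (intro product_prob_spaceI P0)
  have Ssets: "sets (H i) = sets borel" for i unfolding HH by simp
  have SP: "sets (PiM UNIV H) = sets (PiM UNIV (\<lambda>_. borel :: real measure))"
    by (rule sets_PiM_cong) (auto simp: Ssets)
  have SP0: "sets (PiM UNIV H0) = sets (PiM UNIV (\<lambda>_. borel :: real measure))"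
    by (rule sets_PiM_cong) (auto simp: S0)
  have sp: "space (H i) = UNIV" for i using sets_eq_imp_space_eq[OF Ssets[of i]] by simp
  have sp0: "space (H0 i) = UNIV" for i using sets_eq_imp_space_eq[OF S0[of i]] by simp
  have spP: "space (PiM UNIV H) = UNIV" by (simp add: space_PiM sp PiE_UNIV_domain)
  have spP0: "space (PiM UNIV H0) = UNIV" by (simp add: space_PiM sp0 PiE_UNIV_domain)
  have g: "(\<lambda>z j. z j + \<delta> j) \<in> measurable (PiM UNIV H0) (PiM UNIV H)"
    unfolding measurable_cong_sets[OF SP0 SP] by (rule measurable_PiM_single') (auto simp: space_PiM)
  show ?thesis
  proof (rule Hp.PiM_eq[symmetric])
    show "sets (distr (PiM UNIV H0) (PiM UNIV H) (\<lambda>z j. z j + \<delta> j)) = sets (PiM UNIV H)" by simp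
  next
    fix J F assume J: "finite J" "J \<subseteq> UNIV" and F: "\<And>j. j \<in> J \<Longrightarrow> F j \<in> sets (H j)"
    have F': "\<And>j. j \<in> J \<Longrightarrow> F j \<in> sets borel" using F Ssets by auto
    have emb: "prod_emb UNIV H J (Pi\<^sub>E J F) \<in> sets (PiM UNIV H)"
      using J F by (intro measurable_prod_emb sets_PiM_I_finite) auto
    have pre: "(\<lambda>z j. z j + \<delta> j) -` prod_emb UNIV H J (Pi\<^sub>E J F) \<inter> space (PiM UNIV H0)
       = prod_emb UNIV H0 J (Pi\<^sub>E J (\<lambda>j. (\<lambda>x. x + \<delta> j) -` F j))"
      by (auto simp: prod_emb_def spP spP0 space_PiM sp sp0 PiE_UNIV_domain Pi_iff)
    have "emeasure (distr (PiM UNIV H0) (PiM UNIV H) (\<lambda>z j. z j + \<delta> j)) (prod_emb UNIV H J (Pi\<^sub>E J F))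
      = emeasure (PiM UNIV H0) (prod_emb UNIV H0 J (Pi\<^sub>E J (\<lambda>j. (\<lambda>x. x + \<delta> j) -` F j)))"
      by (subst emeasure_distr[OF g emb]) (simp add: pre)
    also have "\<dots> = (\<Prod>j\<in>J. emeasure (H0 j) ((\<lambda>x. x + \<delta> j) -` F j))"
      using J F' by (intro H0p.emeasure_PiM_emb) (auto simp: S0 shift_sets)
    also have "\<dots> = (\<Prod>j\<in>J. emeasure (H j) (F j))"
      using F' gm by (intro prod.cong refl) (auto simp: HH emeasure_distr sp0)
    finally show "emeasure (distr (PiM UNIV H0) (PiM UNIV H) (\<lambda>z j. z j + \<delta> j)) (prod_emb UNIV H J (Pi\<^sub>E J F)) = (\<Prod>j\<in>J. emeasure (H j) (F j))" .
  qed
qed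

text \<open>Measurability of sections of the measurable set \<open>{(Y, z). z + \<delta> Y \<in> A}\<close> in a
  product space.\<close>

lemma borel_measurable_measure_PiM_translate:
  fixes N :: "(nat \<Rightarrow> real) measure" and H0 :: "nat \<Rightarrow> real measure"
    and \<delta> :: "(nat \<Rightarrow> real) \<Rightarrow> nat \<Rightarrow> real" and A :: "(nat \<Rightarrow> real) set"
  assumes P0: "\<And>i. prob_space (H0 i)" and S0: "\<And>i. sets (H0 i) = sets borel"
    and NS: "sets N = sets (PiM UNIV (\<lambda>_. borel :: real measure))"
    and \<delta>: "\<And>j. (\<lambda>Y. \<delta> Y j) \<in> borel_measurable N"
    and A: "A \<in> sets (PiM UNIV (\<lambda>_. borel :: real measure))"
  shows "(\<lambda>Y. measure (PiM UNIV H0) {z. (\<lambda>j. z j + \<delta> Y j) \<in> A}) \<in> borel_measurable N"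
proof -
  interpret prob_space "PiM UNIV H0" by (intro prob_space_PiM P0)
  have SP0: "sets (PiM UNIV H0) = sets (PiM UNIV (\<lambda>_. borel :: real measure))"
    by (rule sets_PiM_cong) (auto simp: S0)
  have space_P0: "space (PiM UNIV H0) = UNIV"
    using sets_eq_imp_space_eq[OF SP0] by (simp add: space_PiM PiE_UNIV_domain)
  have space_N: "space N = UNIV"
    using sets_eq_imp_space_eq[OF NS] by (simp add: space_PiM PiE_UNIV_domain)
  have "(\<lambda>p j. snd p j + \<delta> (fst p) j)
      \<in> measurable (N \<Otimes>\<^sub>M PiM UNIV H0) (PiM UNIV (\<lambda>_. borel :: real measure))"
  proof (rule measurable_PiM_single')
    fix j
    have "(\<lambda>z. z j) \<in> borel_measurable (PiM UNIV H0)"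
      using measurable_component_singleton[of j UNIV H0] by (simp add: measurable_cong_sets[OF refl S0])
    then have "(\<lambda>p. snd p j) \<in> borel_measurable (N \<Otimes>\<^sub>M PiM UNIV H0)"
      by (rule measurable_compose[OF measurable_snd])
    moreover have "(\<lambda>p. \<delta> (fst p) j) \<in> borel_measurable (N \<Otimes>\<^sub>M PiM UNIV H0)"
      using \<delta> by measurable
    ultimately show "(\<lambda>p. snd p j + \<delta> (fst p) j) \<in> borel_measurable (N \<Otimes>\<^sub>M PiM UNIV H0)"
      by (rule borel_measurable_add)
  qed (auto simp: space_pair_measure space_N space_P0)
  from measurable_sets[OF this A]
  have Q: "{p. (\<lambda>j. snd p j + \<delta> (fst p) j) \<in> A} \<in> sets (N \<Otimes>\<^sub>M PiM UNIV H0)"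
    by (simp add: space_pair_measure space_N space_P0 vimage_def)
  have "(\<lambda>Y. emeasure (PiM UNIV H0) {z. (\<lambda>j. z j + \<delta> Y j) \<in> A}) \<in> borel_measurable N"
    using measurable_emeasure_Pair[OF Q] by (simp add: vimage_def)
  then show ?thesis
    unfolding measure_def by (rule borel_measurable_enn2real)
qed

text \<open>Each measure of the family is the translate of the one at \<open>Y = 0\<close>.\<close>

lemma borel_measurable_measure_PiM_normal_affine:
  fixes N :: "(nat \<Rightarrow> real) measure" and \<alpha> \<beta> \<sigma> eta :: "nat \<Rightarrow> real" and m :: nat
    and A :: "(nat \<Rightarrow> real) set"
  assumes NS: "sets N = sets (PiM UNIV (\<lambda>_. borel :: real measure))"
    and A: "A \<in> sets (PiM UNIV (\<lambda>_. borel :: real measure))"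
    and \<sigma>: "\<And>j. j < m \<Longrightarrow> 0 < \<sigma> j"
  shows "(\<lambda>Y. measure (PiM UNIV (\<lambda>j. if j < m
      then density lborel (normal_density (\<beta> j + \<alpha> j * Y j) (sqrt (\<sigma> j)))
      else return borel (eta j))) A) \<in> borel_measurable N"
proof -
  define G where "G Y j = (if j < m then density lborel (normal_density (\<beta> j + \<alpha> j * Y j) (sqrt (\<sigma> j)))
      else return borel (eta j))" for Y j
  define \<delta> where "\<delta> Y j = (if j < m then \<alpha> j * Y j else 0)" for Y :: "nat \<Rightarrow> real" and j
  have P0: "prob_space (G (\<lambda>_. 0) i)" for i
    unfolding G_def using \<sigma> by (auto intro!: prob_space_normal_density prob_space_return)
  have S0: "sets (G (\<lambda>_. 0) i) = sets borel" for i
    unfolding G_def by simp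
  have "G Y j = distr (G (\<lambda>_. 0) j) borel (\<lambda>x. x + \<delta> Y j)" for Y j
    using density_normal_shift[of "\<beta> j" "\<alpha> j * Y j" "sqrt (\<sigma> j)"]
    by (simp add: G_def \<delta>_def distr_return)
  then have shift: "PiM UNIV (G Y) = distr (PiM UNIV (G (\<lambda>_. 0))) (PiM UNIV (G Y)) (\<lambda>z j. z j + \<delta> Y j)"
    for Y by (rule PiM_UNIV_distr_shift[OF P0 S0])
  have SG: "sets (PiM UNIV (G Y)) = sets (PiM UNIV (\<lambda>_. borel :: real measure))" for Y
    by (rule sets_PiM_cong) (auto simp: G_def)
  have "(\<lambda>z j. z j + \<delta> Y j) \<in> measurable (PiM UNIV (G (\<lambda>_. 0))) (PiM UNIV (G Y))" for Y
    unfolding measurable_cong_sets[OF SG SG] by (rule measurable_PiM_single') (auto simp: space_PiM)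
  then have "measure (PiM UNIV (G Y)) A = measure (PiM UNIV (G (\<lambda>_. 0))) {z. (\<lambda>j. z j + \<delta> Y j) \<in> A}"
    for Y
    using sets_eq_imp_space_eq[OF SG[of "\<lambda>_. 0"]] A SG
    by (subst shift, subst measure_distr) (auto simp: space_PiM PiE_UNIV_domain vimage_def)
  moreover have "(\<lambda>Y. measure (PiM UNIV (G (\<lambda>_. 0))) {z. (\<lambda>j. z j + \<delta> Y j) \<in> A}) \<in> borel_measurable N"
    using NS by (intro borel_measurable_measure_PiM_translate[OF P0 S0 NS _ A])
      (simp add: \<delta>_def measurable_cong_sets[OF NS refl])
  ultimately show ?thesis
    unfolding G_def by simp
qed

lemma sets_data_law: "sets (data_law lam theta eps) = sets (PiM UNIV (\<lambda>_. borel :: real measure))"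
  unfolding data_law_def by (rule sets_PiM_cong) auto

lemma space_data_law: "space (data_law lam theta eps) = UNIV"
  using sets_eq_imp_space_eq[OF sets_data_law] by (simp add: space_PiM PiE_UNIV_domain)

lemma prob_space_data_law: "0 < eps \<Longrightarrow> prob_space (data_law lam theta eps)"
  unfolding data_law_def by (intro prob_space_PiM prob_space_normal_density) simp

lemma sets_sieve_posterior:
  "sets (sieve_posterior lam eta eps tau m Y) = sets (PiM UNIV (\<lambda>_. borel :: real measure))"
  unfolding sieve_posterior_def by (rule sets_PiM_cong) auto

lemma bias_nonneg: "summable (\<lambda>j. (theta j - eta j)\<^sup>2) \<Longrightarrow> 0 \<le> bias theta eta m"
  unfolding bias_def by (intro suminf_nonneg summable_ignore_initial_segment) auto

text \<open>A single noise level of the theorem: \<open>tau\<close> and \<open>m\<close> stand for \<open>tau eps\<close> and \<open>m eps\<close>,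
  and \<open>rate\<close> is the paper's \<open>b_m \<or> sigmabar_m\<close>.\<close>

locale sieve_setting =
  fixes lam theta eta tau :: "nat \<Rightarrow> real" and eps K :: real and m :: nat
  assumes eps_pos: "0 < eps" and tau_pos: "\<And>j. 0 < tau j" and lam_nz: "\<And>j. lam j \<noteq> 0"
    and diff_l2: "summable (\<lambda>j. (theta j - eta j)\<^sup>2)"
    and K_ge_1: "1 \<le> K" and m_pos: "0 < m"
    and ratio_le_K: "max (rterm lam theta eta eps tau m) (real m * sigma_max lam eps tau m)
      / max (bias theta eta m) (sigma_bar lam eps tau m) \<le> K"
begin

abbreviation \<sigma> :: "nat \<Rightarrow> real" where
  "\<sigma> \<equiv> post_var lam eps tau"

abbreviation rate :: real where
  "rate \<equiv> max (bias theta eta m) (sigma_bar lam eps tau m)"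

text \<open>The posterior mean is affine in the data, \<open>post_mean Y j = \<sigma> j eta j / tau j + gain j Y j\<close>,
  and it hits \<open>theta j\<close> exactly when \<open>Y j = center j\<close>.\<close>

definition gain :: "nat \<Rightarrow> real" where
  "gain j = \<sigma> j * lam j / eps"

definition center :: "nat \<Rightarrow> real" where
  "center j = (theta j - \<sigma> j * eta j / tau j) / gain j"

definition mean_error :: "(nat \<Rightarrow> real) \<Rightarrow> real" where
  "mean_error Y = (\<Sum>j<m. (post_mean lam eta eps tau Y j - theta j)\<^sup>2)"

definition target :: "(nat \<Rightarrow> real) set" where
  "target = {v. inverse (10 * K) * rate \<le> sq_norm (\<lambda>j. v j - theta j)
                \<and> sq_norm (\<lambda>j. v j - theta j) \<le> 10 * K * rate}"

lemma post_var_pos: "0 < \<sigma> j"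
  using eps_pos tau_pos[of j] by (simp add: post_var_def add_nonneg_pos)

lemma post_var_inverse: "\<sigma> j * ((lam j)\<^sup>2 / eps + inverse (tau j)) = 1"
proof -
  have "0 < (lam j)\<^sup>2 / eps + inverse (tau j)"
    using eps_pos tau_pos[of j] by (simp add: add_nonneg_pos)
  then show ?thesis by (simp add: post_var_def)
qed

lemma gain_nonzero: "gain j \<noteq> 0"
  using post_var_pos[of j] eps_pos lam_nz[of j] by (simp add: gain_def)

lemma post_mean_affine: "post_mean lam eta eps tau Y j = \<sigma> j * eta j / tau j + gain j * Y j"
  by (simp add: post_mean_def gain_def field_simps)

lemma post_mean_minus_theta: "post_mean lam eta eps tau Y j - theta j = gain j * (Y j - center j)"
  using gain_nonzero[of j] by (simp add: post_mean_affine center_def field_simps)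

lemma gain_sq_mult_eps_le: "(gain j)\<^sup>2 * eps \<le> \<sigma> j"
proof -
  have "(gain j)\<^sup>2 * eps = \<sigma> j * (\<sigma> j * (lam j)\<^sup>2 / eps)"
    using eps_pos by (simp add: gain_def field_simps power2_eq_square)
  also have "\<sigma> j * (lam j)\<^sup>2 / eps = 1 - \<sigma> j / tau j"
    using post_var_inverse[of j] by (simp add: field_simps)
  also have "\<sigma> j * (1 - \<sigma> j / tau j) \<le> \<sigma> j"
    using post_var_pos[of j] tau_pos[of j] by (simp add: right_diff_distrib)
  finally show ?thesis .
qed

lemma gain_mult_center_deviation:
  "gain j * (lam j * theta j - center j) = \<sigma> j * (eta j - theta j) / tau j"
proof -
  have "gain j * (lam j * theta j - center j) = (gain j * lam j) * theta j - gain j * center j"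
    by (simp add: algebra_simps)
  also have "gain j * lam j = 1 - \<sigma> j / tau j"
    using post_var_inverse[of j] eps_pos by (simp add: gain_def field_simps power2_eq_square)
  also have "gain j * center j = theta j - \<sigma> j * eta j / tau j"
    using gain_nonzero[of j] by (simp add: center_def)
  also have "(1 - \<sigma> j / tau j) * theta j - (theta j - \<sigma> j * eta j / tau j)
      = \<sigma> j * (eta j - theta j) / tau j"
    using tau_pos[of j] by (simp add: field_simps)
  finally show ?thesis .
qed

lemma sigma_bar_pos: "0 < sigma_bar lam eps tau m"
  unfolding sigma_bar_def using m_pos post_var_pos by (intro sum_pos) auto

lemma rate_pos: "0 < rate"
  using sigma_bar_pos by linarith

lemma bias_le_rate: "bias theta eta m \<le> rate"
  and sigma_bar_le_rate: "sigma_bar lam eps tau m \<le> rate"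
  by simp_all

lemma rterm_le: "rterm lam theta eta eps tau m \<le> K * rate"
  and sigma_max_le: "real m * sigma_max lam eps tau m \<le> K * rate"
  using ratio_le_K rate_pos by (simp_all add: pos_divide_le_eq)

lemma post_var_le_sigma_max: "j < m \<Longrightarrow> \<sigma> j \<le> sigma_max lam eps tau m"
  unfolding sigma_max_def by (intro Max_ge) auto

lemma sigma_max_nonneg: "0 \<le> sigma_max lam eps tau m"
  unfolding sigma_max_def by (intro Max_ge) auto

lemma sum_weighted_le_sigma_max:
  assumes "\<And>j. j < m \<Longrightarrow> 0 \<le> w j \<and> w j \<le> \<sigma> j" and "\<And>j. j < m \<Longrightarrow> 0 \<le> x j"
  shows "(\<Sum>j<m. w j * x j) \<le> sigma_max lam eps tau m * (\<Sum>j<m. x j)"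
  unfolding sum_distrib_left
proof (rule sum_mono)
  fix j assume "j \<in> {..<m}"
  then show "w j * x j \<le> sigma_max lam eps tau m * x j"
    using assms[of j] post_var_le_sigma_max[of j] by (intro mult_right_mono) auto
qed

text \<open>Both Chebyshev bounds below have the shape \<open>sigma_max * c / rate\<close>; Assumption P turns it
  into \<open>K c / m\<close>.\<close>

lemma sigma_max_div_rate_le: "0 \<le> c \<Longrightarrow> sigma_max lam eps tau m * c / rate \<le> K * c / real m"
proof -
  assume c: "0 \<le> c"
  have "sigma_max lam eps tau m * c * real m \<le> K * rate * c"
    using mult_right_mono[OF sigma_max_le c] by (simp add: algebra_simps)
  then show ?thesis
    using rate_pos m_pos by (simp add: field_simps)
qed

lemma prob_space_sieve_posterior: "prob_space (sieve_posterior lam eta eps tau m Y)"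
  unfolding sieve_posterior_def using post_var_pos
  by (intro prob_space_PiM) (auto intro!: prob_space_normal_density prob_space_return)

lemma target_sets: "target \<in> sets (PiM UNIV (\<lambda>_. borel :: real measure))"
  unfolding target_def sq_norm_def by (rule sets_Collect_PiM_borel[OF _ refl]) measurable

lemma posterior_target_ge:
  assumes small: "mean_error Y < (K + 2) * rate"
  shows "1 - 4 * K * (4 * K + 10) / real m \<le> measure (sieve_posterior lam eta eps tau m Y) target"
proof -
  interpret prob_space "sieve_posterior lam eta eps tau m Y"
    by (rule prob_space_sieve_posterior)
  define p where "p = post_mean lam eta eps tau Y"
  define V where "V = (\<Sum>j<m. 2 * (\<sigma> j)\<^sup>2 + 4 * \<sigma> j * (p j - theta j)\<^sup>2)"
  define C where "C = {v. \<bar>sq_norm (\<lambda>j. v j - theta j)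
      - ((\<Sum>j<m. (p j - theta j)\<^sup>2 + \<sigma> j) + bias theta eta m)\<bar> < rate / 2}"
  have "1 - V / (rate / 2)\<^sup>2 \<le> prob C"
    unfolding sieve_posterior_def V_def C_def p_def
    using post_var_pos diff_l2 rate_pos by (intro measure_PiM_sieve_sq_norm_concentration) auto
  also have "prob C \<le> prob target"
  proof (rule finite_measure_mono)
    show "C \<subseteq> target"
    proof
      fix v assume "v \<in> C"
      moreover have "(\<Sum>j<m. (p j - theta j)\<^sup>2 + \<sigma> j) = mean_error Y + sigma_bar lam eps tau m"
        unfolding mean_error_def sigma_bar_def p_def by (simp add: sum.distrib)
      ultimately have dev: "\<bar>sq_norm (\<lambda>j. v j - theta j)
          - (mean_error Y + sigma_bar lam eps tau m + bias theta eta m)\<bar> < rate / 2"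
        by (simp add: C_def)
      have "0 \<le> mean_error Y"
        unfolding mean_error_def by (intro sum_nonneg) auto
      moreover have "rate \<le> bias theta eta m + sigma_bar lam eps tau m"
        using bias_nonneg[OF diff_l2, of m] sigma_bar_pos by linarith
      moreover have "inverse (10 * K) * rate \<le> rate / 2"
      proof -
        have "inverse (10 * K) \<le> 1 / 2"
          using K_ge_1 by (simp add: field_simps)
        from mult_right_mono[OF this, of rate] show ?thesis
          using rate_pos by simp
      qed
      moreover have "rate \<le> K * rate"
        using mult_right_mono[OF K_ge_1 less_imp_le[OF rate_pos]] by (simp only: mult_1)
      moreover have "mean_error Y < K * rate + 2 * rate"
        using small by (simp add: algebra_simps)
      ultimately show "v \<in> target"
        using dev bias_le_rate sigma_bar_le_rate
        unfolding target_def mem_Collect_eq abs_less_iff mult.assoc by linarith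
    qed
  qed (simp add: sets_sieve_posterior target_sets)
  finally have cover: "1 - V / (rate / 2)\<^sup>2 \<le> prob target" .
  have "V / (rate / 2)\<^sup>2 \<le> 4 * K * (4 * K + 10) / real m"
  proof -
    have var_sq: "(\<Sum>j<m. \<sigma> j * \<sigma> j) \<le> sigma_max lam eps tau m * sigma_bar lam eps tau m"
      using sum_weighted_le_sigma_max[of \<sigma> \<sigma>] post_var_pos
      by (simp add: sigma_bar_def less_imp_le)
    have var_error: "(\<Sum>j<m. \<sigma> j * (p j - theta j)\<^sup>2) \<le> sigma_max lam eps tau m * mean_error Y"
      using sum_weighted_le_sigma_max[of \<sigma> "\<lambda>j. (p j - theta j)\<^sup>2"] post_var_pos
      by (simp add: mean_error_def p_def less_imp_le)
    have "V = 2 * (\<Sum>j<m. \<sigma> j * \<sigma> j) + 4 * (\<Sum>j<m. \<sigma> j * (p j - theta j)\<^sup>2)"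
      by (simp add: V_def sum.distrib sum_distrib_left power2_eq_square mult.assoc)
    also have "\<dots> \<le> 2 * (sigma_max lam eps tau m * sigma_bar lam eps tau m)
        + 4 * (sigma_max lam eps tau m * mean_error Y)"
      using var_sq var_error by linarith
    also have "\<dots> = sigma_max lam eps tau m * (2 * sigma_bar lam eps tau m + 4 * mean_error Y)"
      by (simp add: algebra_simps)
    also have "\<dots> \<le> sigma_max lam eps tau m * (rate * (4 * K + 10))"
    proof (rule mult_left_mono[OF _ sigma_max_nonneg])
      show "2 * sigma_bar lam eps tau m + 4 * mean_error Y \<le> rate * (4 * K + 10)"
        using small sigma_bar_le_rate by (simp add: algebra_simps)
    qed
    finally have "V / (rate / 2)\<^sup>2 \<le> 4 * (sigma_max lam eps tau m * (4 * K + 10) / rate)"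
      using rate_pos by (simp add: field_simps power2_eq_square)
    also have "\<dots> \<le> 4 * (K * (4 * K + 10) / real m)"
      using sigma_max_div_rate_le[of "4 * K + 10"] K_ge_1 by simp
    finally show ?thesis by simp
  qed
  with cover show ?thesis by simp
qed

lemma mean_error_eq: "mean_error Y = (\<Sum>j<m. (gain j)\<^sup>2 * (Y j - center j)\<^sup>2)"
  unfolding mean_error_def post_mean_minus_theta by (simp add: power_mult_distrib)

text \<open>The sums bounded in the next two lemmas are the mean and the variance of \<open>mean_error\<close>
  under the data law \<open>Y j \<sim> N(lam j * theta j, eps)\<close>.\<close>

lemma data_mean_of_mean_error_le:
  "(\<Sum>j<m. (gain j)\<^sup>2 * ((lam j * theta j - center j)\<^sup>2 + (sqrt eps)\<^sup>2)) \<le> (K + 1) * rate"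
proof -
  have "(\<Sum>j<m. (gain j)\<^sup>2 * ((lam j * theta j - center j)\<^sup>2 + (sqrt eps)\<^sup>2))
      = (\<Sum>j<m. (gain j * (lam j * theta j - center j))\<^sup>2) + (\<Sum>j<m. (gain j)\<^sup>2 * eps)"
    using eps_pos by (simp add: sum.distrib distrib_left power_mult_distrib)
  also have "(\<Sum>j<m. (gain j * (lam j * theta j - center j))\<^sup>2) = rterm lam theta eta eps tau m"
    unfolding rterm_def gain_mult_center_deviation by (simp add: power_mult_distrib power_divide)
  also have "(\<Sum>j<m. (gain j)\<^sup>2 * eps) \<le> sigma_bar lam eps tau m"
    unfolding sigma_bar_def by (intro sum_mono gain_sq_mult_eps_le)
  finally show ?thesis
    using rterm_le by (simp add: algebra_simps)
qed

lemma data_variance_of_mean_error_le: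
  "(\<Sum>j<m. ((gain j)\<^sup>2)\<^sup>2 * (2 * ((sqrt eps)\<^sup>2)\<^sup>2 + 4 * (sqrt eps)\<^sup>2 * (lam j * theta j - center j)\<^sup>2))
    \<le> sigma_max lam eps tau m * (rate * (2 + 4 * K))"
proof -
  define q where "q j = (gain j)\<^sup>2 * eps" for j
  define \<rho> where "\<rho> j = (gain j * (lam j * theta j - center j))\<^sup>2" for j
  have q: "0 \<le> q j \<and> q j \<le> \<sigma> j" for j
    using gain_sq_mult_eps_le[of j] eps_pos by (simp add: q_def)
  have "(\<Sum>j<m. ((gain j)\<^sup>2)\<^sup>2 * (2 * ((sqrt eps)\<^sup>2)\<^sup>2 + 4 * (sqrt eps)\<^sup>2 * (lam j * theta j - center j)\<^sup>2))
      = 2 * (\<Sum>j<m. q j * q j) + 4 * (\<Sum>j<m. q j * \<rho> j)"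
  proof -
    have "((gain j)\<^sup>2)\<^sup>2 * (2 * ((sqrt eps)\<^sup>2)\<^sup>2 + 4 * (sqrt eps)\<^sup>2 * (lam j * theta j - center j)\<^sup>2)
        = 2 * (q j * q j) + 4 * (q j * \<rho> j)" for j
      using eps_pos by (simp add: q_def \<rho>_def power2_eq_square algebra_simps)
    then show ?thesis by (simp add: sum.distrib sum_distrib_left)
  qed
  also have "\<dots> \<le> 2 * (sigma_max lam eps tau m * sigma_bar lam eps tau m)
      + 4 * (sigma_max lam eps tau m * rterm lam theta eta eps tau m)"
  proof -
    have "(\<Sum>j<m. q j * q j) \<le> sigma_max lam eps tau m * (\<Sum>j<m. q j)"
      using q by (intro sum_weighted_le_sigma_max) auto
    also have "\<dots> \<le> sigma_max lam eps tau m * sigma_bar lam eps tau m"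
      unfolding sigma_bar_def using q by (intro mult_left_mono sum_mono sigma_max_nonneg) auto
    finally have "(\<Sum>j<m. q j * q j) \<le> sigma_max lam eps tau m * sigma_bar lam eps tau m" .
    moreover have "(\<Sum>j<m. q j * \<rho> j) \<le> sigma_max lam eps tau m * rterm lam theta eta eps tau m"
      using sum_weighted_le_sigma_max[of q \<rho>] q
      unfolding \<rho>_def rterm_def gain_mult_center_deviation
      by (simp add: power_mult_distrib power_divide)
    ultimately show ?thesis by linarith
  qed
  also have "\<dots> \<le> sigma_max lam eps tau m * (rate * (2 + 4 * K))"
  proof -
    have "2 * sigma_bar lam eps tau m + 4 * rterm lam theta eta eps tau m \<le> rate * (2 + 4 * K)"
      using rterm_le sigma_bar_le_rate by (simp add: algebra_simps)
    from mult_left_mono[OF this sigma_max_nonneg] show ?thesis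
      by (simp add: algebra_simps)
  qed
  finally show ?thesis .
qed

lemma data_prob_mean_error_large:
  "measure (data_law lam theta eps) {Y. (K + 2) * rate \<le> mean_error Y} \<le> K * (2 + 4 * K) / real m"
proof -
  define F where "F j = density lborel (normal_density (lam j * theta j) (sqrt eps))" for j
  define E where "E = (\<Sum>j<m. (gain j)\<^sup>2 * ((lam j * theta j - center j)\<^sup>2 + (sqrt eps)\<^sup>2))"
  define B where "B = {Y \<in> space (PiM UNIV F). rate \<le> \<bar>(\<Sum>j<m. (gain j)\<^sup>2 * (Y j - center j)\<^sup>2) - E\<bar>}"
  have data: "data_law lam theta eps = PiM UNIV F"
    unfolding data_law_def F_def ..
  interpret prob_space "data_law lam theta eps"
    using prob_space_data_law[OF eps_pos] .
  have "{Y. (K + 2) * rate \<le> mean_error Y} \<subseteq> B"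
    using data_mean_of_mean_error_le space_data_law[of lam theta eps]
    by (auto simp: B_def E_def data[symmetric] mean_error_eq algebra_simps)
  then have "prob {Y. (K + 2) * rate \<le> mean_error Y} \<le> prob B"
    unfolding B_def data[symmetric] space_data_law
    by (intro finite_measure_mono sets_Collect_PiM_borel[OF _ sets_data_law]) measurable
  also have "prob B \<le> sigma_max lam eps tau m * (rate * (2 + 4 * K)) / rate\<^sup>2"
    unfolding data B_def E_def
    using prob_PiM_normal_weighted_squares_deviation[where F=F and J="{..<m}"
        and \<mu>="\<lambda>j. lam j * theta j" and s="\<lambda>_. sqrt eps" and w="\<lambda>j. (gain j)\<^sup>2" and c=center
        and t=rate]
      data_variance_of_mean_error_le rate_pos eps_pos
    by (force simp: F_def intro: order.trans divide_right_mono prob_space_normal_density)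
  also have "\<dots> = sigma_max lam eps tau m * (2 + 4 * K) / rate"
    using rate_pos by (simp add: power2_eq_square)
  also have "\<dots> \<le> K * (2 + 4 * K) / real m"
    using K_ge_1 by (intro sigma_max_div_rate_le) simp
  finally show ?thesis .
qed

lemma borel_measurable_posterior_target:
  "(\<lambda>Y. measure (sieve_posterior lam eta eps tau m Y) target) \<in> borel_measurable (data_law lam theta eps)"
  unfolding sieve_posterior_def post_mean_affine
  by (rule borel_measurable_measure_PiM_normal_affine[OF sets_data_law target_sets post_var_pos])

lemma expected_posterior_target_bounds:
  defines "f \<equiv> \<lambda>Y. measure (sieve_posterior lam eta eps tau m Y) target"
  shows "1 - (4 * K * (4 * K + 10) + K * (2 + 4 * K)) / real m \<le> (\<integral>Y. f Y \<partial>data_law lam theta eps)"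
    and "(\<integral>Y. f Y \<partial>data_law lam theta eps) \<le> 1"
proof -
  interpret prob_space "data_law lam theta eps"
    using prob_space_data_law[OF eps_pos] .
  define B where "B = {Y. (K + 2) * rate \<le> mean_error Y}"
  define g where "g Y = (1 - 4 * K * (4 * K + 10) / real m) - indicator B Y" for Y
  have B_sets: "B \<in> events"
    unfolding B_def mean_error_def post_mean_def
    by (rule sets_Collect_PiM_borel[OF _ sets_data_law]) measurable
  have f_bounds: "0 \<le> f Y \<and> f Y \<le> 1" for Y
    using prob_space.prob_le_1[OF prob_space_sieve_posterior] by (simp add: f_def)
  have f_int: "integrable (data_law lam theta eps) f"
    using f_bounds borel_measurable_posterior_target
    by (intro integrable_const_bound[where B=1]) (auto simp: f_def)
  have g_int: "integrable (data_law lam theta eps) g"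
    unfolding g_def using B_sets
    by (intro Bochner_Integration.integrable_diff integrable_real_indicator)
       (auto simp: emeasure_finite less_top[symmetric])
  have "g Y \<le> f Y" for Y
  proof (cases "Y \<in> B")
    case True
    have "0 \<le> 4 * K * (4 * K + 10) / real m"
      using K_ge_1 by simp
    then show ?thesis
      using True f_bounds[of Y] by (simp add: g_def)
  next
    case False
    then show ?thesis
      using posterior_target_ge[of Y] by (simp add: g_def B_def f_def)
  qed
  then have "integral\<^sup>L (data_law lam theta eps) g \<le> integral\<^sup>L (data_law lam theta eps) f"
    using g_int f_int by (intro integral_mono) auto
  moreover have "integral\<^sup>L (data_law lam theta eps) g = (1 - 4 * K * (4 * K + 10) / real m) - prob B"
    unfolding g_def using B_sets
    by (subst Bochner_Integration.integral_diff)
       (auto simp: prob_space integrable_real_indicator emeasure_finite less_top[symmetric])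
  moreover have "prob B \<le> K * (2 + 4 * K) / real m"
    unfolding B_def by (rule data_prob_mean_error_large)
  ultimately show "1 - (4 * K * (4 * K + 10) + K * (2 + 4 * K)) / real m
      \<le> (\<integral>Y. f Y \<partial>data_law lam theta eps)"
    by (simp add: add_divide_distrib)
  have "integral\<^sup>L (data_law lam theta eps) f \<le> integral\<^sup>L (data_law lam theta eps) (\<lambda>_. 1)"
    using f_int f_bounds by (intro integral_mono) auto
  then show "(\<integral>Y. f Y \<partial>data_law lam theta eps) \<le> 1"
    by (simp add: prob_space)
qed

end

lemma eventually_sieve_setting:
  fixes tau :: "real \<Rightarrow> nat \<Rightarrow> real" and m :: "real \<Rightarrow> nat"
  assumes lam_nz: "\<And>j. lam j \<noteq> 0"
    and diff_l2: "summable (\<lambda>j. (theta j - eta j)\<^sup>2)"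
    and tau_pos: "\<And>eps j. 0 < eps \<Longrightarrow> eps < 1 \<Longrightarrow> 0 < tau eps j"
    and P: "assumption_P lam theta eta tau m eps_th K"
    and m_inf: "filterlim m at_top (at_right 0)"
  shows "\<forall>\<^sub>F eps in at_right 0. sieve_setting lam theta eta (tau eps) eps K (m eps)"
proof -
  have "eventually (\<lambda>eps. 0 < eps \<and> eps < eps_th) (at_right (0::real))"
    using P by (auto simp: assumption_P_def eventually_at_right intro!: exI[of _ eps_th])
  moreover have "eventually (\<lambda>eps. 1 \<le> m eps) (at_right (0::real))"
    using m_inf by (simp add: filterlim_at_top)
  ultimately show ?thesis
    by eventually_elim
       (use lam_nz diff_l2 P tau_pos in \<open>auto simp: sieve_setting_def assumption_P_def\<close>)
qed

theorem mainTheorem4: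
  fixes lam theta eta :: "nat \<Rightarrow> real"
    and tau :: "real \<Rightarrow> nat \<Rightarrow> real"
    and m :: "real \<Rightarrow> nat"
    and eps_th K :: real
  assumes lam_bdd: "bounded (range lam)"
    and lam_nz: "\<And>j. lam j \<noteq> 0"
    and theta_l2: "summable (\<lambda>j. (theta j)\<^sup>2)"
    and diff_l2: "summable (\<lambda>j. (theta j - eta j)\<^sup>2)"
    and tau_pos: "\<And>eps j. 0 < eps \<Longrightarrow> eps < 1 \<Longrightarrow> 0 < tau eps j"
    and P: "assumption_P lam theta eta tau m eps_th K"
    and m_inf: "filterlim m at_top (at_right 0)"
    and sbar_0: "((\<lambda>eps. sigma_bar lam eps (tau eps) (m eps)) \<longlongrightarrow> 0) (at_right 0)"
  shows "((\<lambda>eps. \<integral>Y. measure (sieve_posterior lam eta eps (tau eps) (m eps) Y)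
            {v. inverse (10 * K) * max (bias theta eta (m eps)) (sigma_bar lam eps (tau eps) (m eps))
                  \<le> sq_norm (\<lambda>j. v j - theta j)
              \<and> sq_norm (\<lambda>j. v j - theta j)
                  \<le> 10 * K * max (bias theta eta (m eps)) (sigma_bar lam eps (tau eps) (m eps))}
          \<partial>data_law lam theta eps)
         \<longlongrightarrow> 1) (at_right 0)"
proof -
  define C where "C = 4 * K * (4 * K + 10) + K * (2 + 4 * K)"
  define F where "F = (\<lambda>eps. \<integral>Y. measure (sieve_posterior lam eta eps (tau eps) (m eps) Y)
            {v. inverse (10 * K) * max (bias theta eta (m eps)) (sigma_bar lam eps (tau eps) (m eps))
                  \<le> sq_norm (\<lambda>j. v j - theta j)
              \<and> sq_norm (\<lambda>j. v j - theta j)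
                  \<le> 10 * K * max (bias theta eta (m eps)) (sigma_bar lam eps (tau eps) (m eps))}
          \<partial>data_law lam theta eps)"
  have "\<forall>\<^sub>F eps in at_right 0. sieve_setting lam theta eta (tau eps) eps K (m eps)"
    using lam_nz diff_l2 tau_pos P m_inf by (rule eventually_sieve_setting)
  then have bounds: "\<forall>\<^sub>F eps in at_right 0. 1 - C / real (m eps) \<le> F eps \<and> F eps \<le> 1"
  proof eventually_elim
    case (elim eps)
    interpret sieve_setting lam theta eta "tau eps" eps K "m eps"
      by (rule elim)
    show ?case
      using expected_posterior_target_bounds unfolding target_def F_def C_def by simp
  qed
  have "((\<lambda>eps. C / real (m eps)) \<longlongrightarrow> 0) (at_right 0)"
    using filterlim_compose[OF filterlim_real_sequentially m_inf]
    by (intro tendsto_divide_0[OF tendsto_const] filterlim_at_top_imp_at_infinity)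
  then have lower_lim: "((\<lambda>eps. 1 - C / real (m eps)) \<longlongrightarrow> 1) (at_right 0)"
    using tendsto_diff[OF tendsto_const, of _ 0 _ 1] by simp
  have "\<forall>\<^sub>F eps in at_right 0. 1 - C / real (m eps) \<le> F eps"
    and "\<forall>\<^sub>F eps in at_right 0. F eps \<le> 1"
    using bounds by (auto elim: eventually_mono)
  from tendsto_sandwich[OF this lower_lim tendsto_const] have "(F \<longlongrightarrow> 1) (at_right 0)" .
  then show ?thesis
    unfolding F_def .
qed

end
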